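(* Let $n\in\mathbb{N}_+$, $n\ge 3$, and \[ \phi_n(x):=(n+1)\int_0^1 t(1-t)^{n(1-x)}\frac{(1-t)^{nx}-t^{nx}}{1-2t}\,dt,\quad x\in[0,1]. \] Then $0\le\phi_n(x)\le \frac{4}{n}$ for all $x\in\left[0,1-\frac1n\right]$. *)

theory Defs
  imports "HOL-Analysis.Analysis"
begin

definition phi :: "nat \<Rightarrow> real \<Rightarrow> real" where
  "phi n x = real (n + 1) * integral {0..1}
     (\<lambda>t. t * (1 - t) powr (real n * (1 - x)) *
          (((1 - t) powr (real n * x) - t powr (real n * x)) / (1 - 2 * t)))"

end

(* With a = n x and b = n (1 - x), so that a + b = n and b >= 1, the integrand
   t (1-t)^b ((1-t)^a - t^a) / (1 - 2t) lies between 0 and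
   t (1-t) ((1-t)^(n-1) - t^(n-1)) / (1 - 2t), because the powers with exponents a and b - 1
   preserve the order of t and 1 - t. The majorant is the polynomial
   sum_{j=1}^{n-1} t^(n-j) (1-t)^j, whose terms integrate by the Beta integral to
   1 / ((n+1) C(n,j)). Hence phi n x <= sum_{j=1}^{n-1} 1 / C(n,j): the two outer terms
   contribute 2/n, and each of the n - 3 inner ones is at most 1 / C(n,2). *)

theory Submission
  imports Defs
begin

lemma has_integral_power_mult_power_compl:
  "((\<lambda>t::real. t ^ p * (1 - t) ^ q) has_integral fact p * fact q / fact (p + q + 1)) {0..1}"
proof -
  have beta: "Beta (real p + 1) (real q + 1) = fact p * fact q / fact (p + q + 1)"
  proof -
    have "Gamma (real k + 1) = fact k" for k
      using Gamma_fact[of k, where 'a=real] by (simp add: add.commute)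
    from this[of p] this[of q] this[of "p + q + 1"] show ?thesis
      by (simp add: Beta_def add_ac)
  qed
  have "((\<lambda>t. t powr (real p + 1 - 1) * (1 - t) powr (real q + 1 - 1))
          has_integral Beta (real p + 1) (real q + 1)) {0..1}"
    by (rule has_integral_Beta_real) auto
  then show ?thesis
    unfolding beta
    by (rule has_integral_spike_finite[rotated 2, of _ _ _ "{0, 1}"]) (auto simp: powr_realpow)
qed

lemma has_integral_Bernstein_monomial:
  assumes "j \<le> n"
  shows "((\<lambda>t::real. t ^ (n - j) * (1 - t) ^ j) has_integral 1 / (real (n + 1) * real (n choose j))) {0..1}"
proof -
  have "fact (n - j) * fact j / fact (n - j + j + 1) = (1 / (real (n + 1) * real (n choose j)) :: real)"
    using assms by (simp add: binomial_fact field_simps)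
  then show ?thesis
    using has_integral_power_mult_power_compl[of "n - j" j] by simp
qed

lemma powr_diff_mult_diff_nonneg:
  fixes s u c :: real
  assumes "0 \<le> s" "0 \<le> u" "0 \<le> c"
  shows "0 \<le> (u - s) * (u powr c - s powr c)"
proof (cases "s \<le> u")
  case True
  then show ?thesis using assms powr_mono2[of c s u] by simp
next
  case False
  then show ?thesis using assms powr_mono2[of c u s] by (simp add: mult_nonpos_nonpos)
qed

lemma powr_diff_quotient_bounds:
  fixes s u a b :: real
  assumes s: "0 \<le> s" and u: "0 \<le> u" and a: "0 \<le> a" and b: "1 \<le> b"
  shows "0 \<le> u powr b * (u powr a - s powr a) / (u - s)"
    and "u powr b * (u powr a - s powr a) / (u - s)
           \<le> u * (u powr (a + b - 1) - s powr (a + b - 1)) / (u - s)"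
proof -
  have "0 \<le> (u - s) * (u powr b * (u powr a - s powr a))"
    using mult_nonneg_nonneg[OF powr_ge_zero powr_diff_mult_diff_nonneg[OF s u a], of u b]
    by (simp add: mult_ac)
  then show "0 \<le> u powr b * (u powr a - s powr a) / (u - s)"
    by (auto simp: zero_le_mult_iff zero_le_divide_iff)
  have u_powr: "u * u powr (c - 1) = u powr c" for c
    using u powr_mult_base[of u "c - 1"] by (cases "u = 0") auto
  have gap: "u * (u powr (a + b - 1) - s powr (a + b - 1)) - u powr b * (u powr a - s powr a)
      = u * s powr a * (u powr (b - 1) - s powr (b - 1))"
  proof -
    have "u * (u powr (a + b - 1) - s powr (a + b - 1)) - u powr b * (u powr a - s powr a)
        = u powr b * s powr a - u * s powr (a + b - 1)"
      using u_powr[of "a + b"] powr_add[of u a b] by (simp add: algebra_simps)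
    also have "\<dots> = u * s powr a * (u powr (b - 1) - s powr (b - 1))"
      using u_powr[of b] powr_add[of s a "b - 1"] by (simp add: algebra_simps)
    finally show ?thesis .
  qed
  have "0 \<le> (u - s) * (u * s powr a * (u powr (b - 1) - s powr (b - 1)))"
    using mult_nonneg_nonneg[OF mult_nonneg_nonneg[OF u powr_ge_zero]
        powr_diff_mult_diff_nonneg[OF s u, of "b - 1"], of s a] b
    by (simp add: mult_ac)
  then have "0 \<le> (u * (u powr (a + b - 1) - s powr (a + b - 1)) - u powr b * (u powr a - s powr a)) / (u - s)"
    unfolding gap by (auto simp: zero_le_mult_iff zero_le_divide_iff)
  then show "u powr b * (u powr a - s powr a) / (u - s)
      \<le> u * (u powr (a + b - 1) - s powr (a + b - 1)) / (u - s)"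
    by (simp add: diff_divide_distrib)
qed

lemma phi_integrand_bounds:
  fixes a b t :: real and n :: nat
  assumes a: "0 \<le> a" and b: "1 \<le> b" and ab: "a + b = real n" and n: "2 \<le> n"
    and t: "0 \<le> t" "t \<le> 1"
  shows "0 \<le> t * (1 - t) powr b * (((1 - t) powr a - t powr a) / (1 - 2 * t))"
    and "t * (1 - t) powr b * (((1 - t) powr a - t powr a) / (1 - 2 * t))
           \<le> (\<Sum>j=1..<n. t ^ (n - j) * (1 - t) ^ j)"
proof -
  define u where "u = 1 - t"
  have u: "0 \<le> u" and ut: "u - t = 1 - 2 * t"
    using t by (simp_all add: u_def)
  have f_eq: "t * (1 - t) powr b * (((1 - t) powr a - t powr a) / (1 - 2 * t))
      = t * (u powr b * (u powr a - t powr a) / (u - t))"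
    by (simp add: u_def ut)
  note bounds = powr_diff_quotient_bounds[OF t(1) u a b]
  show "0 \<le> t * (1 - t) powr b * (((1 - t) powr a - t powr a) / (1 - 2 * t))"
    unfolding f_eq using mult_nonneg_nonneg[OF t(1) bounds(1)] by simp
  have exps: "a + b - 1 = real (n - 1)" "n - 1 \<noteq> 0"
    using ab n by auto
  have "t * (1 - t) powr b * (((1 - t) powr a - t powr a) / (1 - 2 * t))
      \<le> t * (u * (u ^ (n - 1) - t ^ (n - 1)) / (u - t))"
    using mult_left_mono[OF bounds(2) t(1)]
    unfolding f_eq exps(1) powr_realpow'[OF u exps(2)] powr_realpow'[OF t(1) exps(2)]
    by simp
  also have "\<dots> \<le> (\<Sum>j=1..<n. t ^ (n - j) * (1 - t) ^ j)"
  proof (cases "u = t")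
    case True
    \<comment> \<open>t = 1/2, where the left-hand side is 0 because division by 0 yields 0\<close>
    then show ?thesis using t by (auto intro!: sum_nonneg)
  next
    case False
    have "t * (u * (u ^ (n - 1) - t ^ (n - 1)) / (u - t))
        = t * u * (\<Sum>i<n - 1. t ^ (n - 1 - Suc i) * u ^ i)"
      using False by (simp add: power_diff_sumr2)
    also have "\<dots> = (\<Sum>i<n - 1. t * u * (t ^ (n - 1 - Suc i) * u ^ i))"
      by (rule sum_distrib_left)
    also have "\<dots> = (\<Sum>i<n - 1. t ^ (n - Suc i) * u ^ Suc i)"
    proof (intro sum.cong refl)
      fix i assume "i \<in> {..<n - 1}"
      then have "n - Suc i = Suc (n - 1 - Suc i)" by auto
      then show "t * u * (t ^ (n - 1 - Suc i) * u ^ i) = t ^ (n - Suc i) * u ^ Suc i"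
        by (simp add: mult_ac)
    qed
    also have "\<dots> = (\<Sum>j=Suc 0..<Suc (n - 1). t ^ (n - j) * u ^ j)"
      unfolding sum.shift_bounds_Suc_ivl lessThan_atLeast0 ..
    also have "Suc (n - 1) = n"
      using n by simp
    finally show ?thesis by (simp add: u_def)
  qed
  finally show "t * (1 - t) powr b * (((1 - t) powr a - t powr a) / (1 - 2 * t))
      \<le> (\<Sum>j=1..<n. t ^ (n - j) * (1 - t) ^ j)" .
qed

lemma integral_nonneg_le_majorant:
  fixes f g :: "'a::euclidean_space \<Rightarrow> real"
  assumes g: "(g has_integral I) S"
    and bounds: "\<And>x. x \<in> S \<Longrightarrow> 0 \<le> f x" "\<And>x. x \<in> S \<Longrightarrow> f x \<le> g x"
  shows "0 \<le> integral S f \<and> integral S f \<le> I"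
proof (cases "f integrable_on S")
  case True
  then show ?thesis
    using g bounds integral_nonneg[OF True] integral_le[OF True has_integral_integrable[OF g]]
    by (simp add: integral_unique)
next
  case False
  \<comment> \<open>then integral S f = 0 by convention\<close>
  have "0 \<le> I"
    using has_integral_nonneg[OF g] bounds by force
  then show ?thesis
    using False by (simp add: not_integrable_integral)
qed

lemma binomial_choose_two_le:
  assumes "2 \<le> k" "k + 2 \<le> n"
  shows "n choose 2 \<le> n choose k"
proof (cases "2 * k \<le> n")
  case True
  then show ?thesis using assms by (intro binomial_mono) auto
next
  case False
  then have "n choose 2 \<le> n choose (n - k)"
    using assms by (intro binomial_mono) auto
  also have "\<dots> = n choose k"
    using assms by (intro binomial_symmetric[symmetric]) auto
  finally show ?thesis .
qed

lemma sum_inverse_binomial_le: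
  assumes n: "3 \<le> n"
  shows "(\<Sum>j=1..<n. 1 / real (n choose j)) \<le> 4 / real n"
proof -
  have split: "{1..<n} = insert 1 (insert (n - 1) {2..<n - 1})"
    using n by auto
  have inner: "1 / real (n choose j) \<le> 2 / (real n * (real n - 1))" if "j \<in> {2..<n - 1}" for j
  proof -
    have "real n * (real n - 1) / 2 = real (n choose 2)"
      using n by (simp add: choose_two of_nat_diff real_of_nat_div field_simps)
    also have "\<dots> \<le> real (n choose j)"
      using that binomial_choose_two_le[of j n] by auto
    finally have "real n * (real n - 1) / 2 \<le> real (n choose j)" .
    moreover have "0 < real n * (real n - 1) / 2"
      using n by simp
    ultimately have "1 / real (n choose j) \<le> 1 / (real n * (real n - 1) / 2)"
      by (intro frac_le) auto
    then show ?thesis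
      by simp
  qed
  have "(\<Sum>j=1..<n. 1 / real (n choose j))
      = 2 / real n + (\<Sum>j=2..<n - 1. 1 / real (n choose j))"
  proof -
    have "n choose (n - 1) = n"
      using n binomial_symmetric[of 1 n] by simp
    then show ?thesis
      using n unfolding split by simp
  qed
  also have "\<dots> \<le> 2 / real n + real (n - 3) * (2 / (real n * (real n - 1)))"
    using sum_bounded_above[of "{2..<n - 1}" "\<lambda>j. 1 / real (n choose j)", OF inner]
    by (simp add: numeral_3_eq_3)
  also have "\<dots> \<le> 4 / real n"
    using n by (simp add: of_nat_diff field_simps)
  finally show ?thesis .
qed

theorem lemma2p5:
  fixes n :: nat and x :: real
  assumes "n \<ge> 3" and "0 \<le> x" and "x \<le> 1 - 1 / real n"
  shows "0 \<le> phi n x \<and> phi n x \<le> 4 / real n"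
proof -
  define a b where "a = real n * x" and "b = real n * (1 - x)"
  have a: "0 \<le> a" and ab: "a + b = real n" and n: "2 \<le> n"
    using assms by (simp_all add: a_def b_def algebra_simps)
  have b: "1 \<le> b"
    using assms mult_left_mono[OF assms(3), of "real n"] by (simp add: b_def right_diff_distrib)
  have phi_ab: "phi n x = real (n + 1) * integral {0..1}
      (\<lambda>t. t * (1 - t) powr b * (((1 - t) powr a - t powr a) / (1 - 2 * t)))"
    by (simp add: phi_def a_def b_def)
  have "((\<lambda>t. \<Sum>j=1..<n. t ^ (n - j) * (1 - t) ^ j)
      has_integral (\<Sum>j=1..<n. 1 / (real (n + 1) * real (n choose j)))) {0..1}"
    by (intro has_integral_sum has_integral_Bernstein_monomial) auto
  from integral_nonneg_le_majorant[OF this] phi_integrand_bounds[OF a b ab n]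
  have "0 \<le> phi n x \<and> phi n x \<le> real (n + 1) * (\<Sum>j=1..<n. 1 / (real (n + 1) * real (n choose j)))"
    unfolding phi_ab by (simp add: mult_left_mono)
  also have "real (n + 1) * (\<Sum>j=1..<n. 1 / (real (n + 1) * real (n choose j)))
      = (\<Sum>j=1..<n. 1 / real (n choose j))"
    by (simp add: sum_distrib_left)
  finally show ?thesis
    using sum_inverse_binomial_le[OF assms(1)] by linarith
qed

end
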